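(* Let $G$ be a group and $\iota\in G$ an element for which there is a finite normal subgroup $L\lhd G$ such that the image of $\iota$ is central in $G/L$. Then the class of gr-odd $\mathbb{Q}[G]$-modules is closed under taking submodules, quotients, and extensions. The same holds for the class of gr-even $\mathbb{Q}[G]$-modules.
   Context: A $\mathbb{Q}[G]$-module $M$ is odd if $\iota\cdot m=-m$ for all $m\in M$, and even if $\iota\cdot m=m$ for all $m\in M$. $M$ is gr-odd (resp. gr-even) if it admits a finite filtration by $\mathbb{Q}[G]$-submodules $0=F_{-1}M\subseteq F_0M\subseteq\cdots\subseteq F_kM=M$ such that every quotient $F_{i+1}M/F_iM$ is odd (resp. even). *)

theory Defs
  imports Complex_Main "HOL-Algebra.Coset"
begin

definition QG_module ::
  "'g monoid \<Rightarrow> (rat \<Rightarrow> 'v::ab_group_add \<Rightarrow> 'v) \<Rightarrow> ('g \<Rightarrow> 'v \<Rightarrow> 'v) \<Rightarrow> 'v set \<Rightarrow> bool" where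
  "QG_module G sc act M \<longleftrightarrow>
     vector_space sc \<and> module.subspace sc M \<and>
     (\<forall>g\<in>carrier G. \<forall>x\<in>M. act g x \<in> M) \<and>
     (\<forall>g\<in>carrier G. \<forall>x\<in>M. \<forall>y\<in>M. act g (x + y) = act g x + act g y) \<and>
     (\<forall>g\<in>carrier G. \<forall>c. \<forall>x\<in>M. act g (sc c x) = sc c (act g x)) \<and>
     (\<forall>x\<in>M. act \<one>\<^bsub>G\<^esub> x = x) \<and>
     (\<forall>g\<in>carrier G. \<forall>h\<in>carrier G. \<forall>x\<in>M. act (g \<otimes>\<^bsub>G\<^esub> h) x = act g (act h x))"

definition QG_hom ::
  "'g monoid \<Rightarrow> (rat \<Rightarrow> 'v::ab_group_add \<Rightarrow> 'v) \<Rightarrow> ('g \<Rightarrow> 'v \<Rightarrow> 'v) \<Rightarrow> 'v set \<Rightarrow>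
   (rat \<Rightarrow> 'w::ab_group_add \<Rightarrow> 'w) \<Rightarrow> ('g \<Rightarrow> 'w \<Rightarrow> 'w) \<Rightarrow> 'w set \<Rightarrow> ('v \<Rightarrow> 'w) \<Rightarrow> bool" where
  "QG_hom G sc1 act1 M sc2 act2 P f \<longleftrightarrow>
     (\<forall>x\<in>M. f x \<in> P) \<and>
     (\<forall>x\<in>M. \<forall>y\<in>M. f (x + y) = f x + f y) \<and>
     (\<forall>c. \<forall>x\<in>M. f (sc1 c x) = sc2 c (f x)) \<and>
     (\<forall>g\<in>carrier G. \<forall>x\<in>M. f (act1 g x) = act2 g (f x))"

text \<open>The quotient B/A (A \<subseteq> B submodules) is odd, i.e. iota [m] = -[m] in B/A,
  i.e. iota m + m \<in> A for all m \<in> B; resp. even: iota m - m \<in> A.\<close>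
definition odd_quot :: "('g \<Rightarrow> 'v \<Rightarrow> 'v) \<Rightarrow> 'g \<Rightarrow> 'v::ab_group_add set \<Rightarrow> 'v set \<Rightarrow> bool" where
  "odd_quot act \<iota> A B \<longleftrightarrow> (\<forall>m\<in>B. act \<iota> m + m \<in> A)"

definition even_quot :: "('g \<Rightarrow> 'v \<Rightarrow> 'v) \<Rightarrow> 'g \<Rightarrow> 'v::ab_group_add set \<Rightarrow> 'v set \<Rightarrow> bool" where
  "even_quot act \<iota> A B \<longleftrightarrow> (\<forall>m\<in>B. act \<iota> m - m \<in> A)"

text \<open>gr-odd / gr-even: a finite filtration 0 = F 0 \<subseteq> F 1 \<subseteq> ... \<subseteq> F k = M by
  Q[G]-submodules with all successive quotients odd (resp. even).
  (Index shifted by one relative to the paper: F i here is F_{i-1} there.)\<close>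
definition gr_odd ::
  "'g monoid \<Rightarrow> (rat \<Rightarrow> 'v::ab_group_add \<Rightarrow> 'v) \<Rightarrow> ('g \<Rightarrow> 'v \<Rightarrow> 'v) \<Rightarrow> 'g \<Rightarrow> 'v set \<Rightarrow> bool" where
  "gr_odd G sc act \<iota> M \<longleftrightarrow> QG_module G sc act M \<and>
     (\<exists>(k::nat) (F::nat \<Rightarrow> 'v set). F 0 = {0} \<and> F k = M \<and>
        (\<forall>i\<le>k. QG_module G sc act (F i)) \<and>
        (\<forall>i<k. F i \<subseteq> F (Suc i) \<and> odd_quot act \<iota> (F i) (F (Suc i))))"

definition gr_even ::
  "'g monoid \<Rightarrow> (rat \<Rightarrow> 'v::ab_group_add \<Rightarrow> 'v) \<Rightarrow> ('g \<Rightarrow> 'v \<Rightarrow> 'v) \<Rightarrow> 'g \<Rightarrow> 'v set \<Rightarrow> bool" where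
  "gr_even G sc act \<iota> M \<longleftrightarrow> QG_module G sc act M \<and>
     (\<exists>(k::nat) (F::nat \<Rightarrow> 'v set). F 0 = {0} \<and> F k = M \<and>
        (\<forall>i\<le>k. QG_module G sc act (F i)) \<and>
        (\<forall>i<k. F i \<subseteq> F (Suc i) \<and> even_quot act \<iota> (F i) (F (Suc i))))"

end

theory Submission
  imports Defs
begin

text \<open>Odd (resp. even) successive quotients mean that \<open>\<phi> = \<iota> + 1\<close> (resp. \<open>\<iota> - 1\<close>) maps
  each step of the filtration into the previous one; call a module gr-zero for \<open>\<phi>\<close> if it has
  such a filtration. Since \<open>\<phi>\<close> commutes with Q[G]-linear maps, a filtration of \<open>M\<close> can be
  intersected with a submodule or pushed forward along \<open>M \<rightarrow> P\<close>, and for an extension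
  \<open>0 \<rightarrow> N \<rightarrow> M \<rightarrow> P \<rightarrow> 0\<close> the image of a filtration of \<open>N\<close> followed by the preimage of a
  filtration of \<open>P\<close> is one of \<open>M\<close>. None of this uses the hypotheses on \<open>L\<close>, nor injectivity
  of \<open>N \<rightarrow> M\<close> or surjectivity of \<open>M \<rightarrow> P\<close>.\<close>

lemma QG_module_closed:
  assumes "QG_module G sc act M"
  shows QG_module_zero: "0 \<in> M"
    and QG_module_add: "x \<in> M \<Longrightarrow> y \<in> M \<Longrightarrow> x + y \<in> M"
    and QG_module_diff: "x \<in> M \<Longrightarrow> y \<in> M \<Longrightarrow> x - y \<in> M"
    and QG_module_scale: "x \<in> M \<Longrightarrow> sc c x \<in> M"
    and QG_module_act: "g \<in> carrier G \<Longrightarrow> x \<in> M \<Longrightarrow> act g x \<in> M"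
proof -
  have "module sc" "module.subspace sc M"
    using assms by (simp_all add: QG_module_def module_iff_vector_space)
  then show "0 \<in> M" "x \<in> M \<Longrightarrow> y \<in> M \<Longrightarrow> x + y \<in> M" "x \<in> M \<Longrightarrow> y \<in> M \<Longrightarrow> x - y \<in> M"
      "x \<in> M \<Longrightarrow> sc c x \<in> M"
    by (simp_all add: module.subspace_0 module.subspace_add module.subspace_diff
        module.subspace_scale)
  show "g \<in> carrier G \<Longrightarrow> x \<in> M \<Longrightarrow> act g x \<in> M"
    using assms by (simp add: QG_module_def)
qed

lemma QG_submoduleI:
  assumes "QG_module G sc act M" "A \<subseteq> M" "0 \<in> A"
    and "\<And>x y. x \<in> A \<Longrightarrow> y \<in> A \<Longrightarrow> x + y \<in> A"
    and "\<And>c x. x \<in> A \<Longrightarrow> sc c x \<in> A"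
    and "\<And>g x. g \<in> carrier G \<Longrightarrow> x \<in> A \<Longrightarrow> act g x \<in> A"
  shows "QG_module G sc act A"
proof -
  have "module sc"
    using assms(1) by (simp add: QG_module_def module_iff_vector_space)
  then have "module.subspace sc A"
    using assms(3-5) by (simp add: module.subspace_def)
  then show ?thesis
    using assms(1,2,6) unfolding QG_module_def by (simp add: subset_iff)
qed

lemma QG_module_Int:
  assumes "QG_module G sc act A" "QG_module G sc act B"
  shows "QG_module G sc act (A \<inter> B)"
  using assms by (intro QG_submoduleI[OF assms(1)]) (auto intro: QG_module_closed)

lemma QG_homD:
  assumes "QG_hom G sc1 act1 M sc2 act2 P f"
  shows QG_hom_range: "x \<in> M \<Longrightarrow> f x \<in> P"
    and QG_hom_add: "x \<in> M \<Longrightarrow> y \<in> M \<Longrightarrow> f (x + y) = f x + f y"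
    and QG_hom_scale: "x \<in> M \<Longrightarrow> f (sc1 c x) = sc2 c (f x)"
    and QG_hom_act: "g \<in> carrier G \<Longrightarrow> x \<in> M \<Longrightarrow> f (act1 g x) = act2 g (f x)"
  using assms by (simp_all add: QG_hom_def)

lemma QG_hom_subset:
  assumes "QG_hom G sc1 act1 M sc2 act2 P f" "A \<subseteq> M"
  shows "QG_hom G sc1 act1 A sc2 act2 P f"
  using assms unfolding QG_hom_def by blast

lemma QG_hom_zero:
  assumes "QG_module G sc1 act1 M" "QG_hom G sc1 act1 M sc2 act2 P f"
  shows "f 0 = 0"
  using QG_hom_add[OF assms(2) QG_module_zero QG_module_zero, OF assms(1) assms(1)] by simp

lemma QG_hom_diff:
  assumes "QG_module G sc1 act1 M" "QG_hom G sc1 act1 M sc2 act2 P f" "x \<in> M" "y \<in> M"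
  shows "f (x - y) = f x - f y"
  using QG_hom_add[OF assms(2) QG_module_diff[OF assms(1,3,4)] assms(4)]
  by (simp add: eq_diff_eq)

lemma QG_module_image:
  assumes "QG_module G sc1 act1 A" "A \<subseteq> M" "QG_module G sc2 act2 P"
    and "QG_hom G sc1 act1 M sc2 act2 P f"
  shows "QG_module G sc2 act2 (f ` A)"
proof -
  have hom: "QG_hom G sc1 act1 A sc2 act2 P f"
    using QG_hom_subset[OF assms(4,2)] .
  show ?thesis
  proof (rule QG_submoduleI[OF assms(3)])
    show "f ` A \<subseteq> P" "0 \<in> f ` A"
      using hom QG_hom_zero[OF assms(1) hom] QG_module_zero[OF assms(1)]
      by (auto simp: QG_hom_def image_iff)
    show "x + y \<in> f ` A" if "x \<in> f ` A" "y \<in> f ` A" for x y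
      using that by (auto simp flip: QG_hom_add[OF hom] intro: QG_module_add[OF assms(1)])
    show "sc2 c x \<in> f ` A" if "x \<in> f ` A" for c x
      using that by (auto simp flip: QG_hom_scale[OF hom] intro: QG_module_scale[OF assms(1)])
    show "act2 g x \<in> f ` A" if "g \<in> carrier G" "x \<in> f ` A" for g x
      using that by (auto simp flip: QG_hom_act[OF hom] intro: QG_module_act[OF assms(1)])
  qed
qed

lemma QG_module_vimage:
  assumes "QG_module G sc1 act1 M" "QG_module G sc2 act2 H"
    and "QG_hom G sc1 act1 M sc2 act2 P f"
  shows "QG_module G sc1 act1 {m \<in> M. f m \<in> H}"
  using assms QG_hom_zero[OF assms(1,3)]
  by (intro QG_submoduleI[OF assms(1)]) (auto simp: QG_hom_def intro: QG_module_closed)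

definition QG_filtration ::
  "'g monoid \<Rightarrow> (rat \<Rightarrow> 'v::ab_group_add \<Rightarrow> 'v) \<Rightarrow> ('g \<Rightarrow> 'v \<Rightarrow> 'v) \<Rightarrow> ('v \<Rightarrow> 'v) \<Rightarrow>
   nat \<Rightarrow> (nat \<Rightarrow> 'v set) \<Rightarrow> bool" where
  "QG_filtration G sc act \<phi> k F \<longleftrightarrow>
     (\<forall>i\<le>k. QG_module G sc act (F i)) \<and> (\<forall>i<k. F i \<subseteq> F (Suc i) \<and> \<phi> ` F (Suc i) \<subseteq> F i)"

definition gr_zero ::
  "'g monoid \<Rightarrow> (rat \<Rightarrow> 'v::ab_group_add \<Rightarrow> 'v) \<Rightarrow> ('g \<Rightarrow> 'v \<Rightarrow> 'v) \<Rightarrow> ('v \<Rightarrow> 'v) \<Rightarrow>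
   'v set \<Rightarrow> bool" where
  "gr_zero G sc act \<phi> M \<longleftrightarrow> (\<exists>k F. QG_filtration G sc act \<phi> k F \<and> F 0 = {0} \<and> F k = M)"

lemma QG_filtrationD:
  assumes "QG_filtration G sc act \<phi> k F"
  shows QG_filtration_module: "i \<le> k \<Longrightarrow> QG_module G sc act (F i)"
    and QG_filtration_mono: "i < k \<Longrightarrow> F i \<subseteq> F (Suc i)"
    and QG_filtration_step: "i < k \<Longrightarrow> m \<in> F (Suc i) \<Longrightarrow> \<phi> m \<in> F i"
  using assms unfolding QG_filtration_def by blast+

lemma QG_filtrationI:
  assumes "\<And>i. i \<le> k \<Longrightarrow> QG_module G sc act (F i)"
    and "\<And>i. i < k \<Longrightarrow> F i \<subseteq> F (Suc i)"
    and "\<And>i m. i < k \<Longrightarrow> m \<in> F (Suc i) \<Longrightarrow> \<phi> m \<in> F i"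
  shows "QG_filtration G sc act \<phi> k F"
  using assms by (auto simp: QG_filtration_def)

lemma QG_filtration_subset_last:
  assumes "QG_filtration G sc act \<phi> k F" "i \<le> k"
  shows "F i \<subseteq> F k"
  using assms(2)
proof (induction rule: inc_induct)
  case (step n)
  then show ?case using QG_filtration_mono[OF assms(1)] by blast
qed simp

lemma QG_filtration_Int:
  assumes "QG_filtration G sc act \<phi> k F" "QG_module G sc act N" "\<And>m. m \<in> N \<Longrightarrow> \<phi> m \<in> N"
  shows "QG_filtration G sc act \<phi> k (\<lambda>i. F i \<inter> N)"
  using assms QG_filtrationD[OF assms(1)]
  by (intro QG_filtrationI) (auto intro: QG_module_Int)

lemma QG_filtration_image:
  assumes "QG_filtration G sc1 act1 \<phi> k F" "F k \<subseteq> M" "QG_module G sc2 act2 P"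
    and "QG_hom G sc1 act1 M sc2 act2 P f" "\<And>m. m \<in> M \<Longrightarrow> f (\<phi> m) = \<psi> (f m)"
  shows "QG_filtration G sc2 act2 \<psi> k (\<lambda>i. f ` F i)"
proof (rule QG_filtrationI)
  have sub: "F i \<subseteq> M" if "i \<le> k" for i
    using QG_filtration_subset_last[OF assms(1) that] assms(2) by blast
  show "QG_module G sc2 act2 (f ` F i)" if "i \<le> k" for i
    using QG_module_image[OF QG_filtration_module[OF assms(1) that] sub[OF that] assms(3,4)] .
  show "f ` F i \<subseteq> f ` F (Suc i)" if "i < k" for i
    using QG_filtration_mono[OF assms(1) that] by (rule image_mono)
  show "\<psi> y \<in> f ` F i" if i: "i < k" and y: "y \<in> f ` F (Suc i)" for i y
  proof -
    obtain m where m: "m \<in> F (Suc i)" "y = f m"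
      using y by blast
    then have "\<psi> y = f (\<phi> m)"
      using assms(5) sub[of "Suc i"] i by auto
    then show ?thesis
      using QG_filtration_step[OF assms(1) i m(1)] by blast
  qed
qed

lemma QG_filtration_vimage:
  assumes "QG_filtration G sc2 act2 \<psi> k H" "QG_module G sc1 act1 M"
    and "QG_hom G sc1 act1 M sc2 act2 P f" "\<And>m. m \<in> M \<Longrightarrow> f (\<phi> m) = \<psi> (f m)"
    and "\<And>m. m \<in> M \<Longrightarrow> \<phi> m \<in> M"
  shows "QG_filtration G sc1 act1 \<phi> k (\<lambda>i. {m \<in> M. f m \<in> H i})"
proof (rule QG_filtrationI)
  show "QG_module G sc1 act1 {m \<in> M. f m \<in> H i}" if "i \<le> k" for i
    using QG_module_vimage[OF assms(2) QG_filtration_module[OF assms(1) that] assms(3)] .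
  show "{m \<in> M. f m \<in> H i} \<subseteq> {m \<in> M. f m \<in> H (Suc i)}" if "i < k" for i
    using QG_filtration_mono[OF assms(1) that] by blast
  show "\<phi> m \<in> {m \<in> M. f m \<in> H i}" if "i < k" "m \<in> {m \<in> M. f m \<in> H (Suc i)}" for i m
    using that assms(4,5) QG_filtration_step[OF assms(1)] by auto
qed

lemma QG_filtration_append:
  assumes "QG_filtration G sc act \<phi> a F" "QG_filtration G sc act \<phi> b H" "H 0 = F a"
  shows "QG_filtration G sc act \<phi> (a + b) (\<lambda>i. if i < a then F i else H (i - a))"
    (is "QG_filtration G sc act \<phi> (a + b) ?E")
proof -
  have E_low: "?E i = F i" if "i \<le> a" for i
    using that assms(3) by (cases "i = a") auto
  have "QG_module G sc act (?E i)" if "i \<le> a + b" for i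
    using that QG_filtration_module[OF assms(1)] QG_filtration_module[OF assms(2)] by auto
  moreover have "?E i \<subseteq> ?E (Suc i) \<and> \<phi> ` ?E (Suc i) \<subseteq> ?E i" if "i < a + b" for i
  proof (cases "i < a")
    case True
    then show ?thesis
      using E_low[of i] E_low[of "Suc i"]
        QG_filtration_mono[OF assms(1)] QG_filtration_step[OF assms(1)] by auto
  next
    case False
    then have "i - a < b" "Suc i - a = Suc (i - a)"
      using that by auto
    then show ?thesis
      using False QG_filtration_mono[OF assms(2)] QG_filtration_step[OF assms(2)] by auto
  qed
  ultimately show ?thesis
    unfolding QG_filtration_def by blast
qed

lemma gr_zero_module:
  assumes "gr_zero G sc act \<phi> M"
  shows "QG_module G sc act M"
  using assms QG_filtration_module unfolding gr_zero_def by fastforce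

lemma gr_zero_submodule:
  assumes "gr_zero G sc act \<phi> M" "N \<subseteq> M" "QG_module G sc act N"
    and "\<And>m. m \<in> N \<Longrightarrow> \<phi> m \<in> N"
  shows "gr_zero G sc act \<phi> N"
proof -
  obtain k F where F: "QG_filtration G sc act \<phi> k F" "F 0 = {0}" "F k = M"
    using assms(1) unfolding gr_zero_def by blast
  have "QG_filtration G sc act \<phi> k (\<lambda>i. F i \<inter> N)"
    using QG_filtration_Int[OF F(1) assms(3,4)] .
  moreover have "F 0 \<inter> N = {0}" "F k \<inter> N = N"
    using F(2,3) assms(2) QG_module_zero[OF assms(3)] by auto
  ultimately show ?thesis
    unfolding gr_zero_def by blast
qed

lemma gr_zero_image:
  assumes "gr_zero G sc1 act1 \<phi> M" "QG_module G sc2 act2 P"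
    and "QG_hom G sc1 act1 M sc2 act2 P f" "\<And>m. m \<in> M \<Longrightarrow> f (\<phi> m) = \<psi> (f m)"
  shows "gr_zero G sc2 act2 \<psi> (f ` M)"
proof -
  obtain k F where F: "QG_filtration G sc1 act1 \<phi> k F" "F 0 = {0}" "F k = M"
    using assms(1) unfolding gr_zero_def by blast
  have "QG_filtration G sc2 act2 \<psi> k (\<lambda>i. f ` F i)"
    by (rule QG_filtration_image[OF F(1) equalityD1[OF F(3)] assms(2,3)]) (fact assms(4))
  moreover have "f ` F 0 = {0}"
    using F(2) QG_hom_zero[OF gr_zero_module[OF assms(1)] assms(3)] by simp
  ultimately show ?thesis
    using F(3) unfolding gr_zero_def by blast
qed

lemma gr_zero_extension:
  assumes "QG_module G scM actM M" "QG_hom G scM actM M scP actP P p"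
    and "gr_zero G scM actM \<phi>M {m \<in> M. p m = 0}" "gr_zero G scP actP \<phi>P P"
    and "\<And>m. m \<in> M \<Longrightarrow> p (\<phi>M m) = \<phi>P (p m)" "\<And>m. m \<in> M \<Longrightarrow> \<phi>M m \<in> M"
  shows "gr_zero G scM actM \<phi>M M"
proof -
  obtain a F where F: "QG_filtration G scM actM \<phi>M a F" "F 0 = {0}" "F a = {m \<in> M. p m = 0}"
    using assms(3) unfolding gr_zero_def by blast
  obtain b H where H: "QG_filtration G scP actP \<phi>P b H" "H 0 = {0}" "H b = P"
    using assms(4) unfolding gr_zero_def by blast
  have H_vimage: "QG_filtration G scM actM \<phi>M b (\<lambda>i. {m \<in> M. p m \<in> H i})"
    by (rule QG_filtration_vimage[OF H(1) assms(1,2)]) (fact assms(5,6))+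
  define E where "E = (\<lambda>i. if i < a then F i else {m \<in> M. p m \<in> H (i - a)})"
  have "QG_filtration G scM actM \<phi>M (a + b) E"
    unfolding E_def by (rule QG_filtration_append[OF F(1) H_vimage]) (simp add: F(3) H(2))
  moreover have "E 0 = {0}"
    using F(2,3) H(2) by (cases "a = 0") (simp_all add: E_def)
  moreover have "E (a + b) = M"
    using H(3) QG_hom_range[OF assms(2)] by (auto simp: E_def)
  ultimately show ?thesis
    unfolding gr_zero_def by blast
qed

lemma QG_module_act_plus_self:
  assumes "QG_module G sc act M" "g \<in> carrier G" "m \<in> M"
  shows "act g m + m \<in> M"
  using QG_module_add[OF assms(1) QG_module_act[OF assms] assms(3)] .

lemma QG_module_act_minus_self:
  assumes "QG_module G sc act M" "g \<in> carrier G" "m \<in> M"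
  shows "act g m - m \<in> M"
  using QG_module_diff[OF assms(1) QG_module_act[OF assms] assms(3)] .

lemma QG_hom_act_plus_self:
  assumes "QG_module G sc1 act1 M" "QG_hom G sc1 act1 M sc2 act2 P f" "g \<in> carrier G" "m \<in> M"
  shows "f (act1 g m + m) = act2 g (f m) + f m"
  using QG_hom_add[OF assms(2) QG_module_act[OF assms(1,3,4)] assms(4)] QG_hom_act[OF assms(2-4)]
  by simp

lemma QG_hom_act_minus_self:
  assumes "QG_module G sc1 act1 M" "QG_hom G sc1 act1 M sc2 act2 P f" "g \<in> carrier G" "m \<in> M"
  shows "f (act1 g m - m) = act2 g (f m) - f m"
  using QG_hom_diff[OF assms(1,2) QG_module_act[OF assms(1,3,4)] assms(4)] QG_hom_act[OF assms(2-4)]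
  by simp

lemma gr_odd_iff_gr_zero: "gr_odd G sc act \<iota> M \<longleftrightarrow> gr_zero G sc act (\<lambda>m. act \<iota> m + m) M"
  unfolding gr_odd_def gr_zero_def QG_filtration_def odd_quot_def image_subset_iff by auto

lemma gr_even_iff_gr_zero: "gr_even G sc act \<iota> M \<longleftrightarrow> gr_zero G sc act (\<lambda>m. act \<iota> m - m) M"
  unfolding gr_even_def gr_zero_def QG_filtration_def even_quot_def image_subset_iff by auto

lemma gr_odd_submodule:
  assumes "\<iota> \<in> carrier G" "gr_odd G sc act \<iota> M" "N \<subseteq> M" "QG_module G sc act N"
  shows "gr_odd G sc act \<iota> N"
  using gr_zero_submodule[OF assms(2)[unfolded gr_odd_iff_gr_zero] assms(3,4)
      QG_module_act_plus_self[OF assms(4,1)]]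
  unfolding gr_odd_iff_gr_zero .

lemma gr_odd_image:
  assumes "\<iota> \<in> carrier G" "gr_odd G sc1 act1 \<iota> M" "QG_module G sc2 act2 P"
    and "QG_hom G sc1 act1 M sc2 act2 P f"
  shows "gr_odd G sc2 act2 \<iota> (f ` M)"
proof -
  have M: "QG_module G sc1 act1 M"
    using assms(2) by (simp add: gr_odd_def)
  from assms(2) show ?thesis
    unfolding gr_odd_iff_gr_zero
    by (rule gr_zero_image[OF _ assms(3,4)]) (rule QG_hom_act_plus_self[OF M assms(4,1)])
qed

lemma gr_odd_extension:
  assumes "\<iota> \<in> carrier G" "QG_module G scM actM M"
    and "QG_hom G scN actN N scM actM M i" "QG_hom G scM actM M scP actP P p"
    and "i ` N = {m \<in> M. p m = 0}" "gr_odd G scN actN \<iota> N" "gr_odd G scP actP \<iota> P"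
  shows "gr_odd G scM actM \<iota> M"
proof -
  have "gr_odd G scM actM \<iota> {m \<in> M. p m = 0}"
    using gr_odd_image[OF assms(1,6,2,3)] unfolding assms(5) .
  with assms(7) show ?thesis
    unfolding gr_odd_iff_gr_zero
    by (intro gr_zero_extension[OF assms(2,4)])
      (simp_all add: QG_hom_act_plus_self[OF assms(2,4,1)] QG_module_act_plus_self[OF assms(2,1)])
qed

lemma gr_even_submodule:
  assumes "\<iota> \<in> carrier G" "gr_even G sc act \<iota> M" "N \<subseteq> M" "QG_module G sc act N"
  shows "gr_even G sc act \<iota> N"
  using gr_zero_submodule[OF assms(2)[unfolded gr_even_iff_gr_zero] assms(3,4)
      QG_module_act_minus_self[OF assms(4,1)]]
  unfolding gr_even_iff_gr_zero .

lemma gr_even_image: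
  assumes "\<iota> \<in> carrier G" "gr_even G sc1 act1 \<iota> M" "QG_module G sc2 act2 P"
    and "QG_hom G sc1 act1 M sc2 act2 P f"
  shows "gr_even G sc2 act2 \<iota> (f ` M)"
proof -
  have M: "QG_module G sc1 act1 M"
    using assms(2) by (simp add: gr_even_def)
  from assms(2) show ?thesis
    unfolding gr_even_iff_gr_zero
    by (rule gr_zero_image[OF _ assms(3,4)]) (rule QG_hom_act_minus_self[OF M assms(4,1)])
qed

lemma gr_even_extension:
  assumes "\<iota> \<in> carrier G" "QG_module G scM actM M"
    and "QG_hom G scN actN N scM actM M i" "QG_hom G scM actM M scP actP P p"
    and "i ` N = {m \<in> M. p m = 0}" "gr_even G scN actN \<iota> N" "gr_even G scP actP \<iota> P"
  shows "gr_even G scM actM \<iota> M"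
proof -
  have "gr_even G scM actM \<iota> {m \<in> M. p m = 0}"
    using gr_even_image[OF assms(1,6,2,3)] unfolding assms(5) .
  with assms(7) show ?thesis
    unfolding gr_even_iff_gr_zero
    by (intro gr_zero_extension[OF assms(2,4)])
      (simp_all add: QG_hom_act_minus_self[OF assms(2,4,1)] QG_module_act_minus_self[OF assms(2,1)])
qed

theorem proposition3p4p2:
  fixes G :: "'g monoid" and \<iota> :: 'g and L :: "'g set"
  assumes "group G" and "\<iota> \<in> carrier G" and "L \<lhd> G" and "finite L"
    and "\<forall>X\<in>carrier (G Mod L).
           (L #>\<^bsub>G\<^esub> \<iota>) \<otimes>\<^bsub>G Mod L\<^esub> X = X \<otimes>\<^bsub>G Mod L\<^esub> (L #>\<^bsub>G\<^esub> \<iota>)"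
  shows
   "(\<forall>(sc::rat \<Rightarrow> 'v::ab_group_add \<Rightarrow> 'v) act M N.
       gr_odd G sc act \<iota> M \<and> N \<subseteq> M \<and> QG_module G sc act N \<longrightarrow> gr_odd G sc act \<iota> N) \<and>
    (\<forall>(sc1::rat \<Rightarrow> 'v1::ab_group_add \<Rightarrow> 'v1) act1 M (sc2::rat \<Rightarrow> 'v2::ab_group_add \<Rightarrow> 'v2) act2 P f.
       gr_odd G sc1 act1 \<iota> M \<and> QG_module G sc2 act2 P \<and> QG_hom G sc1 act1 M sc2 act2 P f \<and>
       f ` M = P \<longrightarrow> gr_odd G sc2 act2 \<iota> P) \<and>
    (\<forall>(scN::rat \<Rightarrow> 'n::ab_group_add \<Rightarrow> 'n) actN N (scM::rat \<Rightarrow> 'm::ab_group_add \<Rightarrow> 'm) actM M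
       (scP::rat \<Rightarrow> 'p::ab_group_add \<Rightarrow> 'p) actP P i p.
       QG_module G scN actN N \<and> QG_module G scM actM M \<and> QG_module G scP actP P \<and>
       QG_hom G scN actN N scM actM M i \<and> inj_on i N \<and>
       QG_hom G scM actM M scP actP P p \<and> p ` M = P \<and> i ` N = {m \<in> M. p m = 0} \<and>
       gr_odd G scN actN \<iota> N \<and> gr_odd G scP actP \<iota> P \<longrightarrow> gr_odd G scM actM \<iota> M) \<and>
    (\<forall>(sc::rat \<Rightarrow> 'v \<Rightarrow> 'v) act M N.
       gr_even G sc act \<iota> M \<and> N \<subseteq> M \<and> QG_module G sc act N \<longrightarrow> gr_even G sc act \<iota> N) \<and>
    (\<forall>(sc1::rat \<Rightarrow> 'v1 \<Rightarrow> 'v1) act1 M (sc2::rat \<Rightarrow> 'v2 \<Rightarrow> 'v2) act2 P f.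
       gr_even G sc1 act1 \<iota> M \<and> QG_module G sc2 act2 P \<and> QG_hom G sc1 act1 M sc2 act2 P f \<and>
       f ` M = P \<longrightarrow> gr_even G sc2 act2 \<iota> P) \<and>
    (\<forall>(scN::rat \<Rightarrow> 'n \<Rightarrow> 'n) actN N (scM::rat \<Rightarrow> 'm \<Rightarrow> 'm) actM M
       (scP::rat \<Rightarrow> 'p \<Rightarrow> 'p) actP P i p.
       QG_module G scN actN N \<and> QG_module G scM actM M \<and> QG_module G scP actP P \<and>
       QG_hom G scN actN N scM actM M i \<and> inj_on i N \<and>
       QG_hom G scM actM M scP actP P p \<and> p ` M = P \<and> i ` N = {m \<in> M. p m = 0} \<and>
       gr_even G scN actN \<iota> N \<and> gr_even G scP actP \<iota> P \<longrightarrow> gr_even G scM actM \<iota> M)"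
  apply (intro conjI allI impI; elim conjE)
  subgoal by (rule gr_odd_submodule[OF assms(2)])
  subgoal premises prems using gr_odd_image[OF assms(2) prems(1-3)] unfolding prems(4) .
  subgoal by (rule gr_odd_extension[OF assms(2)])
  subgoal by (rule gr_even_submodule[OF assms(2)])
  subgoal premises prems using gr_even_image[OF assms(2) prems(1-3)] unfolding prems(4) .
  subgoal by (rule gr_even_extension[OF assms(2)])
  done

end
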